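(* Assume the setting of the context, with $\lambda_d=C-\bar\lambda$, $\rho=\bar\lambda/C\in(0,1)$, and buffer size $K=\dot{\mathbf K}=b\bar\lambda\left[\frac{\alpha}{\beta}\left(\frac{\rho}{1-\rho}-1\right)-1\right]\ge 0$, and let $\mathbf P_d=1-\rho$. Let $\dot{\mathbf D}_q$ be the waiting time of admitted fluid as defined in the context, and let $\dot{\mathbf D}=aG+\dot{\mathbf D}_q$ where $a>0$ is a constant and $G$ is independent of $\dot{\mathbf D}_q$ with $\Pr\{G=g\}=\mathbf P_d^{\,g}(1-\mathbf P_d)$, $g=0,1,2,\dots$. Then $$E[\dot{\mathbf D}]=a\frac{1-\rho}{\rho}+E[\dot{\mathbf D}_q],\qquad \mathrm{var}[\dot{\mathbf D}]=a^2\frac{1-\rho}{\rho^2}+\mathrm{var}[\dot{\mathbf D}_q],$$ where $$E[\dot{\mathbf D}_q]=b\cdot\frac{\left[\left(2\frac{\alpha}{\beta}+1\right)\rho-\left(1+\frac{\alpha}{\beta}\right)\right]\left[\left(2-\frac{\beta}{\alpha}\right)\rho+\left(\frac{\beta}{\alpha}-1\right)\right]}{2\rho(1-\rho)},$$ $$E[\dot{\mathbf D}_q^2]=b^2\cdot\frac{\left[(2\rho-1)\frac{\alpha}{\beta}-(1-\rho)\right]^2\left[(1-\rho)\frac{2\beta}{\alpha}+2\rho-1\right]}{3(1-\rho)^2}.$$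
   Context: Fluid queue model: $\alpha,\beta>0$, $b=1/(\alpha+\beta)$, $\hat\lambda>0$, $\bar\lambda=\hat\lambda\beta/(\alpha+\beta)$, $C>\bar\lambda$, $\lambda_d\ge0$. A buffer of capacity $K$ is drained at rate $C$ whenever nonempty. A two-state continuous-time Markov chain $S\in\{\mathrm{on},\mathrm{off}\}$ leaves on at rate $\alpha$ and off at rate $\beta$; fluid arrives at rate $\hat\lambda+\lambda_d$ when on and $\lambda_d$ when off. The content $x\in[0,K]$ increases at rate (arrival rate $-C$) when positive and $x<K$, decreases at rate $C-$(arrival rate) when positive and $x>0$; at $x=K$ excess fluid is lost. In stationarity let $p_1(X)$, $p_0(X)$ be the densities of $x$ on $(0,K)$ jointly with $S=\mathrm{on}$, $S=\mathrm{off}$, $\Pr\{x=0\}$ the atom at empty (off state) and $\Pr\{x=K\}$ the atom at full (on state); let $\Delta=(\hat\lambda+\lambda_d-C)\Pr\{x=K\}$ and $R=\bar\lambda+\lambda_d-\Delta$ (rate of admitted fluid). The waiting time $\mathbf D_q$ of admitted fluid (FIFO, waits $X/C$ when entering at content $X$) is the random variable with an atom $\lambda_d\Pr\{x=0\}/R$ at $0$, density $\big[(\hat\lambda+\lambda_d)p_1(tC)+\lambda_d p_0(tC)\big]C/R$ for $t\in(0,K/C)$, and an atom $C\Pr\{x=K\}/R$ at $K/C$. $\dot{\mathbf D}_q$ denotes $\mathbf D_q$ under $\lambda_d=C-\bar\lambda$ and $K=\dot{\mathbf K}$. *)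

theory Defs
  imports "HOL-Probability.Probability"
begin

text \<open>Stationary distribution of the on/off fluid queue with buffer K, characterised by
the balance (Kolmogorov forward) equations of the fluid queue:
densities p1 (on) and p0 (off) on (0,K), atom P0 at empty (off state), atom PK at full (on state).\<close>

definition fluid_stationary ::
  "real \<Rightarrow> real \<Rightarrow> real \<Rightarrow> real \<Rightarrow> real \<Rightarrow> real \<Rightarrow>
   (real \<Rightarrow> real) \<Rightarrow> (real \<Rightarrow> real) \<Rightarrow> real \<Rightarrow> real \<Rightarrow> bool" where
  "fluid_stationary \<alpha> \<beta> lhat ld C K p1 p0 P0 PK \<longleftrightarrow>
     (let r1 = lhat + ld - C; r0 = ld - C in
       0 \<le> P0 \<and> 0 \<le> PK \<and>
       (\<forall>x\<in>{0<..<K}. 0 \<le> p1 x \<and> 0 \<le> p0 x) \<and>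
       (\<forall>x\<in>{0<..<K}. (p1 has_real_derivative ((\<beta> * p0 x - \<alpha> * p1 x) / r1)) (at x)) \<and>
       (\<forall>x\<in>{0<..<K}. (p0 has_real_derivative ((\<alpha> * p1 x - \<beta> * p0 x) / r0)) (at x)) \<and>
       (0 < K \<longrightarrow>
          (p1 \<longlongrightarrow> \<beta> * P0 / r1) (at_right 0) \<and>
          (p0 \<longlongrightarrow> \<beta> * P0 / (- r0)) (at_right 0) \<and>
          (p1 \<longlongrightarrow> \<alpha> * PK / r1) (at_left K) \<and>
          (p0 \<longlongrightarrow> \<alpha> * PK / (- r0)) (at_left K)) \<and>
       set_integrable lborel {0<..<K} p1 \<and> set_integrable lborel {0<..<K} p0 \<and>
       (LINT x:{0<..<K}|lborel. p1 x) + PK = \<beta> / (\<alpha> + \<beta>) \<and>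
       (LINT x:{0<..<K}|lborel. p0 x) + P0 = \<alpha> / (\<alpha> + \<beta>))"

definition Dq_law ::
  "real \<Rightarrow> real \<Rightarrow> real \<Rightarrow> real \<Rightarrow> real \<Rightarrow> real \<Rightarrow>
   (real \<Rightarrow> real) \<Rightarrow> (real \<Rightarrow> real) \<Rightarrow> real \<Rightarrow> real \<Rightarrow> real set \<Rightarrow> real" where
  "Dq_law \<alpha> \<beta> lhat ld C K p1 p0 P0 PK A =
     (let lbar = lhat * \<beta> / (\<alpha> + \<beta>);
          \<Delta> = (lhat + ld - C) * PK;
          R = lbar + ld - \<Delta> in
       ld * P0 / R * indicator A 0
       + (LINT t:({0<..<K / C} \<inter> A)|lborel. ((lhat + ld) * p1 (t * C) + ld * p0 (t * C)) * C / R)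
       + C * PK / R * indicator A (K / C))"

end

theory Submission
  imports Defs
begin

text \<open>With \<open>ld = C - lbar\<close> the mean drift vanishes: the net rates \<open>r1 = lhat + ld - C\<close>
  (on) and \<open>r0 = ld - C\<close> (off) satisfy \<open>\<beta> r1 + \<alpha> r0 = 0\<close>.  Then the balance equations force
  both stationary densities to be constant on \<open>(0, K)\<close>.
  With the critical buffer size the normalisation gives \<open>P0 = (1 - \<rho>) / \<rho>\<close>, so the waiting
  time of admitted fluid is uniform on \<open>(0, K / C)\<close> plus atoms at both ends, and its first two
  moments are elementary integrals.  The geometric term \<open>a G\<close> is independent of \<open>D_q\<close>, so the
  means and the variances simply add.\<close>

lemma limit_of_constant_on_Ioo:
  fixes f :: "real \<Rightarrow> real"
  assumes "a < b" and const: "\<forall>x\<in>{a<..<b}. f x = c"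
  shows "(f \<longlongrightarrow> l) (at_right a) \<Longrightarrow> l = c" and "(f \<longlongrightarrow> l) (at_left b) \<Longrightarrow> l = c"
proof -
  have "eventually (\<lambda>x. f x = c) (at_right a)"
    using eventually_at_right_real[OF \<open>a < b\<close>] by (rule eventually_mono) (use const in auto)
  then have "(f \<longlongrightarrow> c) (at_right a)" by (simp add: tendsto_cong)
  then show "(f \<longlongrightarrow> l) (at_right a) \<Longrightarrow> l = c"
    using tendsto_unique trivial_limit_at_right_real by blast
  have "eventually (\<lambda>x. f x = c) (at_left b)"
    using eventually_at_left_real[OF \<open>a < b\<close>] by (rule eventually_mono) (use const in auto)
  then have "(f \<longlongrightarrow> c) (at_left b)" by (simp add: tendsto_cong)
  then show "(f \<longlongrightarrow> l) (at_left b) \<Longrightarrow> l = c"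
    using tendsto_unique trivial_limit_at_left_real by blast
qed

lemma constant_if_zero_derivative_on_Ioo:
  fixes f :: "real \<Rightarrow> real"
  assumes "a < b" and "\<And>x. x \<in> {a<..<b} \<Longrightarrow> (f has_real_derivative 0) (at x)"
    and "(f \<longlongrightarrow> c) (at_right a)"
  shows "\<forall>x\<in>{a<..<b}. f x = c"
proof -
  obtain c' where "\<forall>x\<in>{a<..<b}. f x = c'"
    using has_field_derivative_zero_constant[of "{a<..<b}" f] assms(2)
    by (meson convex_real_interval(8) has_field_derivative_at_within)
  with limit_of_constant_on_Ioo(1)[OF \<open>a < b\<close> this assms(3)] show ?thesis by simp
qed

lemma set_integral_power_Ioo:
  fixes T :: real
  assumes "0 \<le> T"
  shows "(LINT x:{0<..<T}|lborel. x ^ n) = T ^ Suc n / Suc n"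
proof -
  have "(LINT x:{0<..<T}|lborel. x ^ n) = (LBINT x=ereal 0..ereal T. x ^ n)"
    using assms by (simp add: interval_lebesgue_integral_le_eq)
  also have "\<dots> = T ^ Suc n / Suc n - 0 ^ Suc n / Suc n"
  proof (rule interval_integral_FTC_finite)
    show "continuous_on {min 0 T..max 0 T} (\<lambda>x. x ^ n)"
      by (intro continuous_intros)
    show "((\<lambda>x. x ^ Suc n / Suc n) has_vector_derivative x ^ n) (at x within {min 0 T..max 0 T})"
      for x :: real
      using DERIV_cdivide[OF DERIV_pow[of "Suc n" x], of "Suc n"]
      by (simp add: has_real_derivative_iff_has_vector_derivative[symmetric] has_field_derivative_at_within)
  qed
  finally show ?thesis by simp
qed

lemma geometric_sums_times_n_squared:
  fixes c :: real
  assumes "norm c < 1"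
  shows "(\<lambda>n. c ^ n * (of_nat n)\<^sup>2) sums (c * (1 + c) / (1 - c) ^ 3)"
proof -
  have "1 - c \<noteq> 0" using assms by auto
  have times_n: "(\<lambda>n. of_nat n * z ^ n) sums (z / (1 - z)\<^sup>2)" if "norm z < 1" for z :: real
    using geometric_sums_times_n[OF that] by (simp add: mult.commute)
  have der: "((\<lambda>z. z / (1 - z)\<^sup>2) has_field_derivative (1 + c) / (1 - c) ^ 3) (at c)"
  proof -
    have "((\<lambda>z. z / (1 - z)\<^sup>2) has_field_derivative
        (1 * (1 - c)\<^sup>2 - c * (2 * (1 - c) * (0 - 1))) / ((1 - c)\<^sup>2)\<^sup>2) (at c)"
      by (intro derivative_eq_intros) (use \<open>1 - c \<noteq> 0\<close> in auto)
    moreover have "(1 * (1 - c)\<^sup>2 - c * (2 * (1 - c) * (0 - 1))) / ((1 - c)\<^sup>2)\<^sup>2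
        = ((1 + c) * (1 - c)) / ((1 - c) ^ 3 * (1 - c))"
      by (simp add: power2_eq_square power3_eq_cube algebra_simps)
    ultimately show ?thesis using \<open>1 - c \<noteq> 0\<close> by simp
  qed
  have "(\<lambda>n. diffs of_nat n * c ^ n) sums ((1 + c) / (1 - c) ^ 3)"
    by (rule termdiffs_sums_strong[OF times_n der assms]) simp
  then have "(\<lambda>n. c * ((of_nat (Suc n))\<^sup>2 * c ^ n)) sums (c * ((1 + c) / (1 - c) ^ 3))"
    unfolding diffs_def by (intro sums_mult) (simp add: power2_eq_square)
  then have "(\<lambda>n. c ^ Suc n * (of_nat (Suc n))\<^sup>2) sums (c * (1 + c) / (1 - c) ^ 3)"
    by (simp add: mult_ac)
  then show ?thesis by (subst (asm) sums_Suc_iff) simp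
qed

lemma second_moment_geometric_pmf:
  fixes p :: real
  assumes p: "p \<in> {0<..1}"
  shows "integrable (geometric_pmf p) (\<lambda>n. (real n)\<^sup>2)"
    and "measure_pmf.expectation (geometric_pmf p) (\<lambda>n. (real n)\<^sup>2) = (1 - p) * (2 - p) / p\<^sup>2"
proof -
  have "(\<lambda>n. p * ((1 - p) ^ n * (real n)\<^sup>2)) sums (p * ((1 - p) * (1 + (1 - p)) / (1 - (1 - p)) ^ 3))"
    using p by (intro sums_mult geometric_sums_times_n_squared) auto
  moreover have "p * ((1 - p) * (1 + (1 - p)) / (1 - (1 - p)) ^ 3) = (1 - p) * (2 - p) / p\<^sup>2"
    using p by (simp add: field_simps power2_eq_square power3_eq_cube)
  ultimately have sums: "(\<lambda>n. pmf (geometric_pmf p) n * (real n)\<^sup>2) sums ((1 - p) * (2 - p) / p\<^sup>2)"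
    using p by (simp add: mult_ac)
  then have int: "integrable (count_space UNIV) (\<lambda>n. pmf (geometric_pmf p) n * (real n)\<^sup>2)"
    unfolding integrable_count_space_nat_iff by (simp add: sums_iff)
  then show "integrable (geometric_pmf p) (\<lambda>n. (real n)\<^sup>2)"
    unfolding measure_pmf_eq_density by (subst integrable_density) auto
  have "measure_pmf.expectation (geometric_pmf p) (\<lambda>n. (real n)\<^sup>2)
      = (\<integral>n. pmf (geometric_pmf p) n * (real n)\<^sup>2 \<partial>count_space UNIV)"
    unfolding measure_pmf_eq_density by (subst integral_density) auto
  also have "\<dots> = (1 - p) * (2 - p) / p\<^sup>2"
    using sums int by (subst integral_count_space_nat) (simp_all add: sums_iff)
  finally show "measure_pmf.expectation (geometric_pmf p) (\<lambda>n. (real n)\<^sup>2) = (1 - p) * (2 - p) / p\<^sup>2" .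
qed

lemma (in prob_space) geometric_moments:
  fixes G :: "'a \<Rightarrow> nat" and p :: real
  assumes G[measurable]: "G \<in> measurable M (count_space UNIV)" and p: "p \<in> {0<..1}"
    and law: "\<And>g. prob {w \<in> space M. G w = g} = (1 - p) ^ g * p"
  shows "integrable M (\<lambda>w. real (G w))" and "integrable M (\<lambda>w. (real (G w))\<^sup>2)"
    and "expectation (\<lambda>w. real (G w)) = (1 - p) / p"
    and "variance (\<lambda>w. real (G w)) = (1 - p) / p\<^sup>2"
proof -
  have distr_G: "distr M (count_space UNIV) G = measure_pmf (geometric_pmf p)"
  proof (rule measure_eqI_countable[where A=UNIV])
    fix g :: nat
    have "emeasure (distr M (count_space UNIV) G) {g} = emeasure M {w \<in> space M. G w = g}"
      by (subst emeasure_distr) (auto intro!: arg_cong[where f="emeasure M"])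
    also have "\<dots> = emeasure (measure_pmf (geometric_pmf p)) {g}"
      using law[of g] p by (simp add: emeasure_eq_measure emeasure_pmf_single)
    finally show "emeasure (distr M (count_space UNIV) G) {g} = emeasure (measure_pmf (geometric_pmf p)) {g}" .
  qed auto
  have int: "integrable M (\<lambda>w. f (G w))" if "integrable (geometric_pmf p) f" for f :: "nat \<Rightarrow> real"
    using that integrable_distr_eq[OF G, of f] distr_G by simp
  have exp: "expectation (\<lambda>w. f (G w)) = measure_pmf.expectation (geometric_pmf p) f" for f :: "nat \<Rightarrow> real"
    using integral_distr[OF G, of f] distr_G by simp
  show int1: "integrable M (\<lambda>w. real (G w))"
    using int integrable_real_geometric_pmf[OF p] by blast
  show int2: "integrable M (\<lambda>w. (real (G w))\<^sup>2)"
    using int[of "\<lambda>n. (real n)\<^sup>2"] second_moment_geometric_pmf(1)[OF p] by simp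
  show mean: "expectation (\<lambda>w. real (G w)) = (1 - p) / p"
    using exp[of real] expectation_geometric_pmf[OF p] by simp
  have second: "expectation (\<lambda>w. (real (G w))\<^sup>2) = (1 - p) * (2 - p) / p\<^sup>2"
    using exp[of "\<lambda>n. (real n)\<^sup>2"] second_moment_geometric_pmf(2)[OF p] by simp
  have "variance (\<lambda>w. real (G w)) = (1 - p) * (2 - p) / p\<^sup>2 - ((1 - p) / p)\<^sup>2"
    unfolding variance_eq[OF int1 int2] unfolding second mean ..
  also have "\<dots> = (1 - p) / p\<^sup>2"
    using p by (simp add: field_simps power2_eq_square)
  finally show "variance (\<lambda>w. real (G w)) = (1 - p) / p\<^sup>2" .
qed

lemma (in prob_space) indep_var_affine_sum_moments:
  fixes X Y :: "'a \<Rightarrow> real"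
  assumes indep: "indep_var borel X borel Y"
    and [simp]: "integrable M X" "integrable M (\<lambda>w. (X w)\<^sup>2)"
    and [simp]: "integrable M Y" "integrable M (\<lambda>w. (Y w)\<^sup>2)"
  shows "expectation (\<lambda>w. a * X w + Y w) = a * expectation X + expectation Y"
    and "variance (\<lambda>w. a * X w + Y w) = a\<^sup>2 * variance X + variance Y"
proof -
  have [simp]: "integrable M (\<lambda>w. X w * Y w)"
    and XY: "expectation (\<lambda>w. X w * Y w) = expectation X * expectation Y"
    using indep_var_integrable[OF indep] indep_var_lebesgue_integral[OF indep] by simp_all
  show mean: "expectation (\<lambda>w. a * X w + Y w) = a * expectation X + expectation Y"
    by simp
  have sq: "(\<lambda>w. (a * X w + Y w)\<^sup>2) = (\<lambda>w. a\<^sup>2 * (X w)\<^sup>2 + 2 * a * (X w * Y w) + (Y w)\<^sup>2)"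
    by (simp add: power2_eq_square algebra_simps)
  have V: "variance (\<lambda>w. a * X w + Y w)
      = a\<^sup>2 * expectation (\<lambda>w. (X w)\<^sup>2) + 2 * a * expectation (\<lambda>w. X w * Y w)
        + expectation (\<lambda>w. (Y w)\<^sup>2) - (a * expectation X + expectation Y)\<^sup>2"
    by (subst variance_eq) (simp_all add: sq mean)
  have vX: "variance X = expectation (\<lambda>w. (X w)\<^sup>2) - (expectation X)\<^sup>2"
    and vY: "variance Y = expectation (\<lambda>w. (Y w)\<^sup>2) - (expectation Y)\<^sup>2"
    by (simp_all add: variance_eq)
  show "variance (\<lambda>w. a * X w + Y w) = a\<^sup>2 * variance X + variance Y"
    by (simp only: V vX vY XY) algebra
qed

lemma (in prob_space) distr_restrict_uniform_part:
  fixes X :: "'a \<Rightarrow> real"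
  assumes X[measurable]: "X \<in> borel_measurable M" and "0 \<le> D"
    and law: "\<And>A. A \<in> sets borel \<Longrightarrow>
      prob (X -` (A \<inter> {0<..<T}) \<inter> space M) = D * measure lborel ({0<..<T} \<inter> A)"
  shows "distr (restrict_space M (X -` {0<..<T} \<inter> space M)) borel X
    = density lborel (\<lambda>x. D * indicator {0<..<T} x)"
    (is "distr ?R borel X = ?N")
proof (rule measure_eqI)
  show "sets (distr ?R borel X) = sets ?N" by simp
next
  fix A assume "A \<in> sets (distr ?R borel X)"
  then have A[measurable]: "A \<in> sets borel" by simp
  have X_R: "X \<in> measurable ?R borel"
    by (rule measurable_restrict_space1) (rule X)
  have finite: "emeasure lborel ({0<..<T} \<inter> A) \<noteq> \<infinity>"
  proof -
    have "emeasure lborel ({0<..<T} \<inter> A) \<le> emeasure lborel {0..T}"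
      by (intro emeasure_mono) auto
    then show ?thesis by (auto simp: top_unique emeasure_lborel_Icc_eq)
  qed
  have "emeasure (distr ?R borel X) A = emeasure ?R (X -` A \<inter> space ?R)"
    by (rule emeasure_distr[OF X_R A])
  also have "\<dots> = emeasure M (X -` A \<inter> (X -` {0<..<T} \<inter> space M))"
    by (subst emeasure_restrict_space) (auto simp: space_restrict_space)
  also have "X -` A \<inter> (X -` {0<..<T} \<inter> space M) = X -` (A \<inter> {0<..<T}) \<inter> space M"
    by auto
  also have "emeasure M \<dots> = ennreal D * emeasure lborel ({0<..<T} \<inter> A)"
    using law[OF A] finite \<open>0 \<le> D\<close>
    by (simp add: emeasure_eq_measure ennreal_mult emeasure_eq_ennreal_measure)
  also have "\<dots> = emeasure ?N A"
    using \<open>0 \<le> D\<close>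
    by (subst emeasure_density) (auto simp: ennreal_mult' nn_integral_cmult_indicator
        intro!: nn_integral_cong split: split_indicator simp flip: nn_integral_cmult_indicator)
  finally show "emeasure (distr ?R borel X) A = emeasure ?N A" .
qed

lemma (in prob_space) integral_atoms_uniform_law:
  fixes X :: "'a \<Rightarrow> real" and f :: "real \<Rightarrow> real"
  assumes X[measurable]: "X \<in> borel_measurable M" and "0 \<le> T" and "0 \<le> D"
    and law: "\<And>A. A \<in> sets borel \<Longrightarrow> prob (X -` A \<inter> space M)
        = a0 * indicator A 0 + D * measure lborel ({0<..<T} \<inter> A) + aK * indicator A T"
    and f_cont: "continuous_on UNIV f" and "f 0 = 0"
  shows "integrable M (\<lambda>w. f (X w))"
    and "expectation (\<lambda>w. f (X w)) = aK * f T + D * (LINT x:{0<..<T}|lborel. f x)"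
proof -
  have f[measurable]: "f \<in> borel_measurable borel"
    using f_cont by (simp add: borel_measurable_continuous_onI)
  define \<Omega> where "\<Omega> = X -` {0<..<T} \<inter> space M"
  define ET where "ET = X -` {T} \<inter> space M"
  have [measurable]: "\<Omega> \<in> sets M" "ET \<in> sets M"
    unfolding \<Omega>_def ET_def by measurable
  have "{0<..<T} \<inter> - {0..T} = {}" by auto
  then have "prob (X -` (- {0..T}) \<inter> space M) = 0"
    using law[of "- {0..T}"] \<open>0 \<le> T\<close> by (simp add: indicator_def)
  then have "AE w in M. X w \<in> {0..T}"
    by (subst AE_iff_measurable[of "X -` (- {0..T}) \<inter> space M"])
      (auto simp: emeasure_eq_measure)
  then have AE_split: "AE w in M. f (X w) = f T * indicator ET w + indicator \<Omega> w *\<^sub>R f (X w)"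
    using AE_space by eventually_elim (use \<open>f 0 = 0\<close> in \<open>auto simp: ET_def \<Omega>_def indicator_def\<close>)
  have distr_\<Omega>: "distr (restrict_space M \<Omega>) borel X = density lborel (\<lambda>x. D * indicator {0<..<T} x)"
    unfolding \<Omega>_def
  proof (rule distr_restrict_uniform_part[OF X \<open>0 \<le> D\<close>])
    fix A :: "real set" assume "A \<in> sets borel"
    moreover have "{0<..<T} \<inter> (A \<inter> {0<..<T}) = {0<..<T} \<inter> A" by auto
    ultimately show "prob (X -` (A \<inter> {0<..<T}) \<inter> space M) = D * measure lborel ({0<..<T} \<inter> A)"
      using law[of "A \<inter> {0<..<T}"] by (simp add: indicator_def)
  qed
  have X_\<Omega>: "X \<in> borel_measurable (restrict_space M \<Omega>)"
    by (rule measurable_restrict_space1) (rule X)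
  have "set_integrable lborel {0..T} f"
    unfolding set_integrable_def
    by (rule borel_integrable_compact) (auto intro: continuous_on_subset[OF f_cont])
  then have "set_integrable lborel {0<..<T} f"
    by (rule set_integrable_subset) auto
  then have "integrable lborel (\<lambda>x. (D * indicator {0<..<T} x) *\<^sub>R f x)"
    unfolding set_integrable_def
    using integrable_mult_right[where M=lborel and f="\<lambda>x. indicator {0<..<T} x * f x" and c=D]
    by (simp add: mult.assoc)
  then have "integrable (density lborel (\<lambda>x. D * indicator {0<..<T} x)) f"
    by (subst integrable_density) (use \<open>0 \<le> D\<close> in auto)
  then have "integrable (restrict_space M \<Omega>) (\<lambda>w. f (X w))"
    using integrable_distr_eq[OF X_\<Omega> f] distr_\<Omega> by simp
  then have int_\<Omega>: "integrable M (\<lambda>w. indicator \<Omega> w *\<^sub>R f (X w))"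
    using integrable_restrict_space[of \<Omega> M "\<lambda>w. f (X w)"] by simp
  have "expectation (\<lambda>w. indicator \<Omega> w *\<^sub>R f (X w)) = (\<integral>w. f (X w) \<partial>restrict_space M \<Omega>)"
    by (rule integral_restrict_space[symmetric]) simp
  also have "\<dots> = integral\<^sup>L (distr (restrict_space M \<Omega>) borel X) f"
    by (rule integral_distr[OF X_\<Omega> f, symmetric])
  also have "\<dots> = (\<integral>x. (D * indicator {0<..<T} x) *\<^sub>R f x \<partial>lborel)"
    unfolding distr_\<Omega> by (rule integral_density) (use \<open>0 \<le> D\<close> in auto)
  also have "\<dots> = D * (LINT x:{0<..<T}|lborel. f x)"
    by (simp add: set_lebesgue_integral_def mult.assoc)
  finally have integral_\<Omega>:
    "expectation (\<lambda>w. indicator \<Omega> w *\<^sub>R f (X w)) = D * (LINT x:{0<..<T}|lborel. f x)" .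
  have int_ET: "integrable M (\<lambda>w. f T * indicator ET w)"
    by (intro integrable_mult_right integrable_real_indicator) (auto simp: less_top[symmetric])
  have atom_T: "f T * prob ET = aK * f T"
  proof (cases "T = 0")
    case False
    then show ?thesis using law[of "{T}"] unfolding ET_def by (simp add: indicator_def)
  qed (use \<open>f 0 = 0\<close> in simp)
  show "integrable M (\<lambda>w. f (X w))"
    by (rule integrable_cong_AE_imp[OF _ _ AE_symmetric[OF AE_split]]) (use int_ET int_\<Omega> in auto)
  have "expectation (\<lambda>w. f (X w)) = expectation (\<lambda>w. f T * indicator ET w + indicator \<Omega> w *\<^sub>R f (X w))"
    by (rule integral_cong_AE) (use AE_split in auto)
  also have "\<dots> = f T * prob ET + D * (LINT x:{0<..<T}|lborel. f x)"
    using int_ET int_\<Omega> integral_\<Omega> by simp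
  finally show "expectation (\<lambda>w. f (X w)) = aK * f T + D * (LINT x:{0<..<T}|lborel. f x)"
    using atom_T by simp
qed

lemma (in prob_space) power_moments_atoms_uniform_law:
  fixes X :: "'a \<Rightarrow> real"
  assumes "X \<in> borel_measurable M" and "0 \<le> T" and "0 \<le> D"
    and "\<And>A. A \<in> sets borel \<Longrightarrow> prob (X -` A \<inter> space M)
        = a0 * indicator A 0 + D * measure lborel ({0<..<T} \<inter> A) + aK * indicator A T"
    and "0 < n"
  shows "integrable M (\<lambda>w. X w ^ n)"
    and "expectation (\<lambda>w. X w ^ n) = aK * T ^ n + D * (T ^ Suc n / Suc n)"
proof -
  have "continuous_on UNIV (\<lambda>x::real. x ^ n)" by (intro continuous_intros)
  note moment = integral_atoms_uniform_law[OF assms(1-4) this]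
  show "integrable M (\<lambda>w. X w ^ n)"
    using moment(1) \<open>0 < n\<close> by simp
  show "expectation (\<lambda>w. X w ^ n) = aK * T ^ n + D * (T ^ Suc n / Suc n)"
    using moment(2) \<open>0 < n\<close> set_integral_power_Ioo[OF \<open>0 \<le> T\<close>, of n] by simp
qed

text \<open>\<open>\<beta> p0 - \<alpha> p1\<close> is a first integral of the balance equations when the mean drift
  \<open>\<beta> r1 + \<alpha> r0\<close> vanishes; the boundary condition at 0 makes it zero.\<close>

lemma balance_equations_zero_drift_constant:
  fixes p1 p0 :: "real \<Rightarrow> real"
  assumes "0 < K" and "r1 \<noteq> 0" and "r0 \<noteq> 0" and drift: "\<beta> * r1 + \<alpha> * r0 = 0"
    and d1: "\<forall>x\<in>{0<..<K}. (p1 has_real_derivative ((\<beta> * p0 x - \<alpha> * p1 x) / r1)) (at x)"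
    and d0: "\<forall>x\<in>{0<..<K}. (p0 has_real_derivative ((\<alpha> * p1 x - \<beta> * p0 x) / r0)) (at x)"
    and l1: "(p1 \<longlongrightarrow> c1) (at_right 0)" and l0: "(p0 \<longlongrightarrow> c0) (at_right 0)"
    and balance: "\<beta> * c0 = \<alpha> * c1"
  shows "\<forall>x\<in>{0<..<K}. p1 x = c1 \<and> p0 x = c0"
proof -
  define u where "u x = \<beta> * p0 x - \<alpha> * p1 x" for x
  have du: "(u has_real_derivative 0) (at x)" if "x \<in> {0<..<K}" for x
  proof -
    have "(u has_real_derivative \<beta> * ((\<alpha> * p1 x - \<beta> * p0 x) / r0) - \<alpha> * ((\<beta> * p0 x - \<alpha> * p1 x) / r1)) (at x)"
      unfolding u_def using d1 d0 that by (auto intro!: derivative_eq_intros simp: algebra_simps)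
    moreover have "\<beta> * ((\<alpha> * p1 x - \<beta> * p0 x) / r0) - \<alpha> * ((\<beta> * p0 x - \<alpha> * p1 x) / r1)
        = - u x * (\<beta> * r1 + \<alpha> * r0) / (r0 * r1)"
      unfolding u_def using \<open>r1 \<noteq> 0\<close> \<open>r0 \<noteq> 0\<close> by (simp add: field_simps)
    ultimately show ?thesis using drift by simp
  qed
  have "(u \<longlongrightarrow> \<beta> * c0 - \<alpha> * c1) (at_right 0)"
    unfolding u_def by (intro tendsto_intros l0 l1)
  then have "(u \<longlongrightarrow> 0) (at_right 0)" using balance by simp
  with du have u0: "\<forall>x\<in>{0<..<K}. u x = 0"
    by (rule constant_if_zero_derivative_on_Ioo[OF \<open>0 < K\<close>])
  have "\<forall>x\<in>{0<..<K}. p1 x = c1"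
    using d1 u0 by (intro constant_if_zero_derivative_on_Ioo[OF \<open>0 < K\<close> _ l1]) (simp add: u_def)
  moreover have "\<forall>x\<in>{0<..<K}. p0 x = c0"
    using d0 u0 by (intro constant_if_zero_derivative_on_Ioo[OF \<open>0 < K\<close> _ l0]) (simp add: u_def)
  ultimately show ?thesis by blast
qed

lemma fluid_stationary_zero_drift:
  assumes "0 < \<alpha>" and "0 < \<beta>" and "ld < C" and "0 \<le> K"
    and drift: "\<beta> * (lhat + ld - C) + \<alpha> * (ld - C) = 0"
    and st: "fluid_stationary \<alpha> \<beta> lhat ld C K p1 p0 P0 PK"
  shows "(\<forall>x\<in>{0<..<K}. p1 x = \<beta> * P0 / (lhat + ld - C) \<and> p0 x = \<beta> * P0 / (C - ld))
    \<and> \<alpha> * PK = \<beta> * P0 \<and> K * (\<beta> * P0 / (lhat + ld - C)) + PK = \<beta> / (\<alpha> + \<beta>)"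
proof -
  define r1 where "r1 = lhat + ld - C"
  have "\<beta> * r1 = \<alpha> * (C - ld)"
    using drift unfolding r1_def by (simp add: algebra_simps)
  then have "0 < r1"
    using \<open>ld < C\<close> \<open>0 < \<alpha>\<close> \<open>0 < \<beta>\<close> by (metis diff_gt_0_iff_gt mult_pos_pos zero_less_mult_pos)
  note S = st[unfolded fluid_stationary_def Let_def, folded r1_def]
  have "(\<forall>x\<in>{0<..<K}. p1 x = \<beta> * P0 / r1 \<and> p0 x = \<beta> * P0 / (C - ld))
    \<and> \<alpha> * PK = \<beta> * P0 \<and> K * (\<beta> * P0 / r1) + PK = \<beta> / (\<alpha> + \<beta>)"
  proof (cases "K = 0")
    case True
    then show ?thesis using S by (auto simp: set_lebesgue_integral_def)
  next
    case False
    with \<open>0 \<le> K\<close> have "0 < K" by simp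
    with S have d1: "\<forall>x\<in>{0<..<K}. (p1 has_real_derivative ((\<beta> * p0 x - \<alpha> * p1 x) / r1)) (at x)"
      and d0: "\<forall>x\<in>{0<..<K}. (p0 has_real_derivative ((\<alpha> * p1 x - \<beta> * p0 x) / (ld - C))) (at x)"
      and l1: "(p1 \<longlongrightarrow> \<beta> * P0 / r1) (at_right 0)"
      and l0: "(p0 \<longlongrightarrow> \<beta> * P0 / (C - ld)) (at_right 0)"
      and lK: "(p1 \<longlongrightarrow> \<alpha> * PK / r1) (at_left K)"
      and mass: "(LINT x:{0<..<K}|lborel. p1 x) + PK = \<beta> / (\<alpha> + \<beta>)"
      by auto
    have "\<beta> / (C - ld) = \<alpha> / r1"
      using \<open>\<beta> * r1 = \<alpha> * (C - ld)\<close> \<open>0 < r1\<close> \<open>ld < C\<close> by (simp add: field_simps)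
    then have "\<beta> * (\<beta> * P0 / (C - ld)) = \<alpha> * (\<beta> * P0 / r1)"
      by (metis times_divide_eq_left times_divide_eq_right)
    then have const: "\<forall>x\<in>{0<..<K}. p1 x = \<beta> * P0 / r1 \<and> p0 x = \<beta> * P0 / (C - ld)"
      using drift \<open>0 < r1\<close> \<open>ld < C\<close> unfolding r1_def[symmetric]
      by (intro balance_equations_zero_drift_constant[OF \<open>0 < K\<close> _ _ _ d1 d0 l1 l0]) auto
    then have "\<alpha> * PK / r1 = \<beta> * P0 / r1"
      using limit_of_constant_on_Ioo(2)[OF \<open>0 < K\<close> _ lK] by blast
    then have "\<alpha> * PK = \<beta> * P0" using \<open>0 < r1\<close> by (simp add: field_simps)
    moreover have "(LINT x:{0<..<K}|lborel. p1 x) = (LINT x:{0<..<K}|lborel. \<beta> * P0 / r1)"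
      by (rule set_lebesgue_integral_cong) (use const in auto)
    ultimately show ?thesis
      using const mass \<open>0 < K\<close> by (simp add: set_integral_const mult_ac)
  qed
  then show ?thesis unfolding r1_def .
qed

lemma critical_buffer_stationary_solution:
  fixes \<alpha> \<beta> \<rho> C lhat ld K P0 PK :: real
  assumes "0 < \<alpha>" and "0 < \<beta>" and "0 < C" and "0 < \<rho>" and "\<rho> < 1"
    and lhat: "lhat * \<beta> = \<rho> * C * (\<alpha> + \<beta>)" and ld: "ld = C * (1 - \<rho>)"
    and K: "K = \<rho> * C / (\<alpha> + \<beta>) * (\<alpha> / \<beta> * (\<rho> / (1 - \<rho>) - 1) - 1)" and "0 \<le> K"
    and st: "fluid_stationary \<alpha> \<beta> lhat ld C K p1 p0 P0 PK"
  shows "P0 = (1 - \<rho>) / \<rho>" and "PK = \<beta> * (1 - \<rho>) / (\<alpha> * \<rho>)"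
    and "\<forall>x\<in>{0<..<K}. p1 x = \<beta>\<^sup>2 * (1 - \<rho>) / (\<alpha> * \<rho>\<^sup>2 * C) \<and> p0 x = \<beta> * (1 - \<rho>) / (\<rho>\<^sup>2 * C)"
proof -
  define r1 where "r1 = \<rho> * C * \<alpha> / \<beta>"
  have lhat_eq: "lhat = \<rho> * C * (\<alpha> + \<beta>) / \<beta>"
    using \<open>0 < \<beta>\<close> by (simp add: nonzero_eq_divide_eq lhat)
  have r1_eq: "lhat + ld - C = r1"
    unfolding r1_def ld lhat_eq using \<open>0 < \<beta>\<close> by (simp add: field_simps)
  have "C - ld = \<rho> * C" unfolding ld by (simp add: algebra_simps)
  moreover have "\<beta> * (lhat + ld - C) + \<alpha> * (ld - C) = 0"
    unfolding r1_eq unfolding r1_def ld using \<open>0 < \<beta>\<close> by (simp add: field_simps)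
  ultimately have "(\<forall>x\<in>{0<..<K}. p1 x = \<beta> * P0 / r1 \<and> p0 x = \<beta> * P0 / (\<rho> * C))
      \<and> \<alpha> * PK = \<beta> * P0 \<and> K * (\<beta> * P0 / r1) + PK = \<beta> / (\<alpha> + \<beta>)"
    using fluid_stationary_zero_drift[OF \<open>0 < \<alpha>\<close> \<open>0 < \<beta>\<close> _ \<open>0 \<le> K\<close> _ st] r1_eq
      \<open>0 < \<rho>\<close> \<open>0 < C\<close> by (simp add: ld)
  then have const: "\<forall>x\<in>{0<..<K}. p1 x = \<beta> * P0 / r1 \<and> p0 x = \<beta> * P0 / (\<rho> * C)"
    and "\<alpha> * PK = \<beta> * P0" and mass: "K * (\<beta> * P0 / r1) + PK = \<beta> / (\<alpha> + \<beta>)"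
    by auto
  then have PK: "PK = \<beta> * P0 / \<alpha>"
    using \<open>0 < \<alpha>\<close> by (simp add: field_simps)
  with mass have mass: "\<beta> * P0 * (K / r1 + 1 / \<alpha>) = \<beta> / (\<alpha> + \<beta>)"
    by (simp add: algebra_simps)
  have "\<alpha> \<noteq> 0" "\<beta> \<noteq> 0" "C \<noteq> 0" "\<rho> \<noteq> 0" "1 - \<rho> \<noteq> 0" "\<alpha> + \<beta> \<noteq> 0"
    using \<open>0 < \<alpha>\<close> \<open>0 < \<beta>\<close> \<open>0 < C\<close> \<open>0 < \<rho>\<close> \<open>\<rho> < 1\<close> by auto
  then have sum: "K / r1 + 1 / \<alpha> = \<rho> / ((\<alpha> + \<beta>) * (1 - \<rho>))"
    unfolding K r1_def by (simp add: divide_simps) algebra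
  from mass have "\<beta> * P0 * (\<rho> / ((\<alpha> + \<beta>) * (1 - \<rho>))) = \<beta> / (\<alpha> + \<beta>)"
    unfolding sum .
  then have "\<beta> / (\<alpha> + \<beta>) * (P0 * \<rho> / (1 - \<rho>)) = \<beta> / (\<alpha> + \<beta>) * 1"
    by (simp add: field_simps)
  moreover have "\<beta> / (\<alpha> + \<beta>) \<noteq> 0" using \<open>0 < \<alpha>\<close> \<open>0 < \<beta>\<close> by simp
  ultimately have "P0 * \<rho> / (1 - \<rho>) = 1" using mult_left_cancel by blast
  then show P0: "P0 = (1 - \<rho>) / \<rho>"
    using \<open>0 < \<rho>\<close> \<open>\<rho> < 1\<close> by (simp add: field_simps)
  show "PK = \<beta> * (1 - \<rho>) / (\<alpha> * \<rho>)"
    unfolding PK P0 by simp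
  show "\<forall>x\<in>{0<..<K}. p1 x = \<beta>\<^sup>2 * (1 - \<rho>) / (\<alpha> * \<rho>\<^sup>2 * C) \<and> p0 x = \<beta> * (1 - \<rho>) / (\<rho>\<^sup>2 * C)"
    using const unfolding P0 r1_def using \<open>0 < \<alpha>\<close> \<open>0 < \<beta>\<close> \<open>0 < C\<close> \<open>0 < \<rho>\<close>
    by (simp add: field_simps power2_eq_square)
qed

lemma Dq_law_critical_buffer:
  fixes \<alpha> \<beta> \<rho> C lhat ld K P0 PK :: real
  assumes "0 < \<alpha>" and "0 < \<beta>" and "0 < C" and "0 < \<rho>" and "\<rho> < 1"
    and lhat: "lhat * \<beta> = \<rho> * C * (\<alpha> + \<beta>)" and ld: "ld = C * (1 - \<rho>)"
    and "K = \<rho> * C / (\<alpha> + \<beta>) * (\<alpha> / \<beta> * (\<rho> / (1 - \<rho>) - 1) - 1)" and "0 \<le> K"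
    and "fluid_stationary \<alpha> \<beta> lhat ld C K p1 p0 P0 PK"
    and A: "A \<in> sets borel"
  shows "Dq_law \<alpha> \<beta> lhat ld C K p1 p0 P0 PK A
    = ((1 - \<rho>) / \<rho>)\<^sup>2 * indicator A 0
      + (\<alpha> + \<beta>) * \<beta> * (1 - \<rho>) / (\<alpha> * \<rho> ^ 3) * measure lborel ({0<..<K / C} \<inter> A)
      + \<beta> * (1 - \<rho>) / (\<alpha> * \<rho>\<^sup>2) * indicator A (K / C)"
proof -
  note sol = critical_buffer_stationary_solution[OF assms(1-10)]
  have lhat_eq: "lhat = \<rho> * C * (\<alpha> + \<beta>) / \<beta>"
    using \<open>0 < \<beta>\<close> by (simp add: nonzero_eq_divide_eq lhat)
  have "lhat * \<beta> / (\<alpha> + \<beta>) = \<rho> * C"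
    using lhat \<open>0 < \<alpha>\<close> \<open>0 < \<beta>\<close> by simp
  moreover have "(lhat + ld - C) * PK = C * (1 - \<rho>)"
    unfolding sol(2) lhat_eq ld using \<open>0 < \<alpha>\<close> \<open>0 < \<beta>\<close> \<open>0 < \<rho>\<close>
    by (simp add: field_simps)
  ultimately have R: "lhat * \<beta> / (\<alpha> + \<beta>) + ld - (lhat + ld - C) * PK = \<rho> * C"
    unfolding ld by simp
  define D where "D = (\<alpha> + \<beta>) * \<beta> * (1 - \<rho>) / (\<alpha> * \<rho> ^ 3)"
  have "((lhat + ld) * p1 (t * C) + ld * p0 (t * C)) * C / (\<rho> * C) = D"
    if "t \<in> {0<..<K / C} \<inter> A" for t
  proof -
    have "t * C \<in> {0<..<K}" using that \<open>0 < C\<close> by (auto simp: field_simps)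
    then have "p1 (t * C) = \<beta>\<^sup>2 * (1 - \<rho>) / (\<alpha> * \<rho>\<^sup>2 * C)"
      and "p0 (t * C) = \<beta> * (1 - \<rho>) / (\<rho>\<^sup>2 * C)"
      using sol(3) by auto
    then show ?thesis
      unfolding D_def lhat_eq ld using \<open>0 < \<alpha>\<close> \<open>0 < \<beta>\<close> \<open>0 < C\<close> \<open>0 < \<rho>\<close>
      by (simp add: field_simps power2_eq_square power3_eq_cube) algebra
  qed
  then have "(LINT t:({0<..<K / C} \<inter> A)|lborel. ((lhat + ld) * p1 (t * C) + ld * p0 (t * C)) * C / (\<rho> * C))
      = (LINT t:({0<..<K / C} \<inter> A)|lborel. D)"
    using A by (intro set_lebesgue_integral_cong) auto
  also have "\<dots> = D * measure lborel ({0<..<K / C} \<inter> A)"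
  proof (subst set_integral_const)
    show "{0<..<K / C} \<inter> A \<in> sets lborel" using A by simp
    have "emeasure lborel ({0<..<K / C} \<inter> A) \<le> emeasure lborel {0<..<K / C}"
      by (intro emeasure_mono) auto
    then show "emeasure lborel ({0<..<K / C} \<inter> A) \<noteq> \<infinity>"
      using \<open>0 \<le> K\<close> \<open>0 < C\<close> by (auto simp: top_unique)
  qed simp
  finally have density: "(LINT t:({0<..<K / C} \<inter> A)|lborel.
      ((lhat + ld) * p1 (t * C) + ld * p0 (t * C)) * C / (\<rho> * C)) = D * measure lborel ({0<..<K / C} \<inter> A)" .
  show ?thesis
    unfolding Dq_law_def Let_def R density unfolding D_def sol(1,2) ld
    using \<open>0 < \<alpha>\<close> \<open>0 < C\<close> \<open>0 < \<rho>\<close> by (simp add: power2_eq_square)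
qed

lemma critical_buffer_waiting_moments_closed_form:
  fixes \<alpha> \<beta> \<rho> :: real
  assumes "\<alpha> \<noteq> 0" "\<beta> \<noteq> 0" "\<rho> \<noteq> 0" "1 - \<rho> \<noteq> 0" "\<alpha> + \<beta> \<noteq> 0"
  defines "T \<equiv> \<rho> / (\<alpha> + \<beta>) * (\<alpha> / \<beta> * (\<rho> / (1 - \<rho>) - 1) - 1)"
    and "aK \<equiv> \<beta> * (1 - \<rho>) / (\<alpha> * \<rho>\<^sup>2)"
    and "D \<equiv> (\<alpha> + \<beta>) * \<beta> * (1 - \<rho>) / (\<alpha> * \<rho> ^ 3)"
  shows "aK * T + D * (T\<^sup>2 / 2) = 1 / (\<alpha> + \<beta>) * (((2 * (\<alpha> / \<beta>) + 1) * \<rho> - (1 + \<alpha> / \<beta>))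
                              * ((2 - \<beta> / \<alpha>) * \<rho> + (\<beta> / \<alpha> - 1)))
                           / (2 * \<rho> * (1 - \<rho>))"
    and "aK * T\<^sup>2 + D * (T ^ 3 / 3) = (1 / (\<alpha> + \<beta>))\<^sup>2 * (((2 * \<rho> - 1) * (\<alpha> / \<beta>) - (1 - \<rho>))\<^sup>2
                              * ((1 - \<rho>) * (2 * \<beta> / \<alpha>) + 2 * \<rho> - 1))
                           / (3 * (1 - \<rho>)\<^sup>2)"
  unfolding T_def aK_def D_def using assms(1-5) by (simp_all add: divide_simps) algebra+

lemma (in prob_space) critical_buffer_waiting_time_moments:
  fixes Dq :: "'a \<Rightarrow> real" and \<alpha> \<beta> \<rho> C lhat ld K P0 PK :: real
  assumes "0 < \<alpha>" and "0 < \<beta>" and "0 < C" and "0 < \<rho>" and "\<rho> < 1"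
    and "lhat * \<beta> = \<rho> * C * (\<alpha> + \<beta>)" and "ld = C * (1 - \<rho>)"
    and K: "K = \<rho> * C / (\<alpha> + \<beta>) * (\<alpha> / \<beta> * (\<rho> / (1 - \<rho>) - 1) - 1)" and "0 \<le> K"
    and "fluid_stationary \<alpha> \<beta> lhat ld C K p1 p0 P0 PK"
    and Dq: "Dq \<in> borel_measurable M"
    and Dq_law: "\<And>A. A \<in> sets borel \<Longrightarrow>
      prob (Dq -` A \<inter> space M) = Dq_law \<alpha> \<beta> lhat ld C K p1 p0 P0 PK A"
  shows "integrable M Dq" and "integrable M (\<lambda>w. (Dq w)\<^sup>2)"
    and "expectation Dq = 1 / (\<alpha> + \<beta>) * (((2 * (\<alpha> / \<beta>) + 1) * \<rho> - (1 + \<alpha> / \<beta>))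
                              * ((2 - \<beta> / \<alpha>) * \<rho> + (\<beta> / \<alpha> - 1)))
                           / (2 * \<rho> * (1 - \<rho>))"
    and "expectation (\<lambda>w. (Dq w)\<^sup>2) = (1 / (\<alpha> + \<beta>))\<^sup>2 * (((2 * \<rho> - 1) * (\<alpha> / \<beta>) - (1 - \<rho>))\<^sup>2
                              * ((1 - \<rho>) * (2 * \<beta> / \<alpha>) + 2 * \<rho> - 1))
                           / (3 * (1 - \<rho>)\<^sup>2)"
proof -
  define T where "T = \<rho> / (\<alpha> + \<beta>) * (\<alpha> / \<beta> * (\<rho> / (1 - \<rho>) - 1) - 1)"
  have "K / C = T" unfolding K T_def using \<open>0 < C\<close> by simp
  then have T_nonneg: "0 \<le> T" using \<open>0 \<le> K\<close> \<open>0 < C\<close> by auto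
  have density_nonneg: "0 \<le> (\<alpha> + \<beta>) * \<beta> * (1 - \<rho>) / (\<alpha> * \<rho> ^ 3)"
    using \<open>0 < \<alpha>\<close> \<open>0 < \<beta>\<close> \<open>0 < \<rho>\<close> \<open>\<rho> < 1\<close> by simp
  have "prob (Dq -` A \<inter> space M) = ((1 - \<rho>) / \<rho>)\<^sup>2 * indicator A 0
      + (\<alpha> + \<beta>) * \<beta> * (1 - \<rho>) / (\<alpha> * \<rho> ^ 3) * measure lborel ({0<..<T} \<inter> A)
      + \<beta> * (1 - \<rho>) / (\<alpha> * \<rho>\<^sup>2) * indicator A T" if "A \<in> sets borel" for A
    using Dq_law_critical_buffer[OF assms(1-10) that] Dq_law[OF that] \<open>K / C = T\<close> by simp
  note moments = power_moments_atoms_uniform_law[OF Dq T_nonneg density_nonneg this]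
  show "integrable M Dq" "integrable M (\<lambda>w. (Dq w)\<^sup>2)"
    using moments(1)[of 1] moments(1)[of 2] by simp_all
  have "\<alpha> \<noteq> 0" "\<beta> \<noteq> 0" "\<rho> \<noteq> 0" "1 - \<rho> \<noteq> 0" "\<alpha> + \<beta> \<noteq> 0"
    using \<open>0 < \<alpha>\<close> \<open>0 < \<beta>\<close> \<open>0 < \<rho>\<close> \<open>\<rho> < 1\<close> by auto
  note closed_form = critical_buffer_waiting_moments_closed_form[OF this, folded T_def]
  show "expectation Dq = 1 / (\<alpha> + \<beta>) * (((2 * (\<alpha> / \<beta>) + 1) * \<rho> - (1 + \<alpha> / \<beta>))
                              * ((2 - \<beta> / \<alpha>) * \<rho> + (\<beta> / \<alpha> - 1)))
                           / (2 * \<rho> * (1 - \<rho>))"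
    using moments(2)[of 1] closed_form(1) by (simp add: power2_eq_square)
  show "expectation (\<lambda>w. (Dq w)\<^sup>2) = (1 / (\<alpha> + \<beta>))\<^sup>2 * (((2 * \<rho> - 1) * (\<alpha> / \<beta>) - (1 - \<rho>))\<^sup>2
                              * ((1 - \<rho>) * (2 * \<beta> / \<alpha>) + 2 * \<rho> - 1))
                           / (3 * (1 - \<rho>)\<^sup>2)"
    using moments(2)[of 2] closed_form(2) by (simp add: power2_eq_square power3_eq_cube)
qed

theorem theorem2:
  fixes \<alpha> \<beta> lhat C a :: real
    and p1 p0 :: "real \<Rightarrow> real" and P0 PK ld K Pd :: real
    and M :: "'w measure" and G :: "'w \<Rightarrow> nat" and Dq :: "'w \<Rightarrow> real"
  defines "b \<equiv> 1 / (\<alpha> + \<beta>)"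
    and "lbar \<equiv> lhat * \<beta> / (\<alpha> + \<beta>)"
    and "\<rho> \<equiv> lhat * \<beta> / (\<alpha> + \<beta>) / C"
  assumes "0 < \<alpha>" and "0 < \<beta>" and "0 < lhat" and "lbar < C"
    and "ld = C - lbar"
    and "K = b * lbar * (\<alpha> / \<beta> * (\<rho> / (1 - \<rho>) - 1) - 1)"
    and "0 \<le> K"
    and "Pd = 1 - \<rho>"
    and "fluid_stationary \<alpha> \<beta> lhat ld C K p1 p0 P0 PK"
    and "0 < a"
    and "prob_space M"
    and "G \<in> measurable M (count_space UNIV)"
    and "Dq \<in> borel_measurable M"
    and "prob_space.indep_var M borel (\<lambda>w. real (G w)) borel Dq"
    and "\<And>g. measure M {w \<in> space M. G w = g} = Pd ^ g * (1 - Pd)"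
    and "\<And>A. A \<in> sets borel \<Longrightarrow>
           measure M (Dq -` A \<inter> space M) = Dq_law \<alpha> \<beta> lhat ld C K p1 p0 P0 PK A"
  shows
    "(\<integral>w. a * real (G w) + Dq w \<partial>M) = a * (1 - \<rho>) / \<rho> + (\<integral>w. Dq w \<partial>M)
     \<and> (\<integral>w. (a * real (G w) + Dq w - (\<integral>v. a * real (G v) + Dq v \<partial>M))\<^sup>2 \<partial>M)
         = a\<^sup>2 * (1 - \<rho>) / \<rho>\<^sup>2 + (\<integral>w. (Dq w - (\<integral>v. Dq v \<partial>M))\<^sup>2 \<partial>M)
     \<and> (\<integral>w. Dq w \<partial>M) = b * (((2 * (\<alpha> / \<beta>) + 1) * \<rho> - (1 + \<alpha> / \<beta>))
                              * ((2 - \<beta> / \<alpha>) * \<rho> + (\<beta> / \<alpha> - 1)))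
                           / (2 * \<rho> * (1 - \<rho>))
     \<and> (\<integral>w. (Dq w)\<^sup>2 \<partial>M) = b\<^sup>2 * (((2 * \<rho> - 1) * (\<alpha> / \<beta>) - (1 - \<rho>))\<^sup>2
                              * ((1 - \<rho>) * (2 * \<beta> / \<alpha>) + 2 * \<rho> - 1))
                           / (3 * (1 - \<rho>)\<^sup>2)"
proof -
  interpret prob_space M by fact
  have "0 < lbar" unfolding lbar_def using \<open>0 < \<alpha>\<close> \<open>0 < \<beta>\<close> \<open>0 < lhat\<close> by simp
  then have "0 < C" and \<rho>: "0 < \<rho>" "\<rho> < 1"
    using \<open>lbar < C\<close> unfolding \<rho>_def lbar_def[symmetric] by auto
  have lbar: "lbar = \<rho> * C"
    unfolding \<rho>_def lbar_def using \<open>0 < C\<close> by simp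
  then have lhat: "lhat * \<beta> = \<rho> * C * (\<alpha> + \<beta>)"
    unfolding lbar_def using \<open>0 < \<alpha>\<close> \<open>0 < \<beta>\<close> by (simp add: divide_eq_eq)
  have ld: "ld = C * (1 - \<rho>)"
    using \<open>ld = C - lbar\<close> unfolding lbar by (simp add: algebra_simps)
  have K: "K = \<rho> * C / (\<alpha> + \<beta>) * (\<alpha> / \<beta> * (\<rho> / (1 - \<rho>) - 1) - 1)"
    using assms(9) unfolding b_def lbar by simp
  note Dq_moments = critical_buffer_waiting_time_moments[OF \<open>0 < \<alpha>\<close> \<open>0 < \<beta>\<close> \<open>0 < C\<close> \<rho>
      lhat ld K \<open>0 \<le> K\<close> assms(12,16,19)]
  have "\<rho> \<in> {0<..1}" using \<rho> by simp
  have G_law: "prob {w \<in> space M. G w = g} = (1 - \<rho>) ^ g * \<rho>" for g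
    using assms(18)[of g] unfolding \<open>Pd = 1 - \<rho>\<close> by simp
  note G_moments = geometric_moments[OF assms(15) \<open>\<rho> \<in> {0<..1}\<close> G_law]
  note total = indep_var_affine_sum_moments[OF assms(17) G_moments(1,2) Dq_moments(1,2), of a]
  have "expectation (\<lambda>w. a * real (G w) + Dq w) = a * (1 - \<rho>) / \<rho> + expectation Dq"
    by (simp only: total(1) G_moments(3) times_divide_eq_right)
  moreover have "variance (\<lambda>w. a * real (G w) + Dq w) = a\<^sup>2 * (1 - \<rho>) / \<rho>\<^sup>2 + variance Dq"
    by (simp only: total(2) G_moments(4) times_divide_eq_right)
  ultimately show ?thesis
    by (intro conjI Dq_moments(3,4)[folded b_def])
qed

end
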